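(* For every $T>0$ and $\lambda>0$, $$\lim_{\delta\to0}\limsup_{m\to\infty}\mathbb{P}^{(m)}_\sigma\big(w'_T(x,\delta)\ge\lambda\big)=0.$$
   Context: Fix a real exponent $b>0$ and a sequence $\sigma=(\sigma_p)_{p\in\mathcal P}$ of nonnegative reals indexed by the set $\mathcal P$ of primes with $\sum_p\sigma_p<\infty$. For a prime $p$, $\mathbb{Q}_p$ denotes the $p$-adic numbers with absolute value $|\cdot|_p$ and $\mathbb{Z}_p$ its closed unit ball. Let $G_p\subset\mathbb{Q}_p$ be the set of $p$-adic numbers of the form $\sum_{k<0}a_kp^k$ with $a_k\in\{0,\dots,p-1\}$, only finitely many nonzero; $G_p$ is a set of representatives of $\mathbb{Q}_p/\mathbb{Z}_p$ and is given the group structure of $\mathbb{Q}_p/\mathbb{Z}_p$. Let $X^{(p)}$ be a $G_p$-valued random variable with $\Pr(|X^{(p)}|_p=p^k)=(p^b-1)p^{-kb}$ for every integer $k\ge1$, and, conditionally on $|X^{(p)}|_p=p^k$, uniformly distributed on the finite set $\{x\in G_p:|x|_p=p^k\}$. Let $X^{(p)}_1,X^{(p)}_2,\dots$ be i.i.d. copies of $X^{(p)}$ and $S^{(p)}_n=X^{(p)}_1+\dots+X^{(p)}_n$ (sum in the group $G_p$), $S^{(p)}_0=0$. Put $D_p=\frac{p^b(p-1)}{p^{b+1}-1}\sigma_p$. For an integer $m\ge0$, let $\mathbb{P}^{(m)}_p$ be the law on $D(\mathbb{Q}_p)$ (càdlàg paths $[0,\infty)\to\mathbb{Q}_p$) of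 $t\mapsto p^mS^{(p)}_{\lfloor D_pp^{mb}t\rfloor}$, and $\mathbb{P}^{(m)}_\sigma=\prod_{p}\mathbb{P}^{(m)}_p$ the product measure on $\prod_pD(\mathbb{Q}_p)$ (independent components). For $x$ with values in $\prod_p\mathbb{Q}_p$ and an interval $I$, set $w(x,I)=\sup_{s,t\in I}\max_p|x_p(s)-x_p(t)|_p/p$ (this is $\sup_{s,t\in I}|x(s)-x(t)|_{\mathbb{A}_{\mathbb{Q}}}$ where $|y|_{\mathbb{A}_{\mathbb{Q}}}=\max_p|y_p|_p/p$ is the adelic absolute value). A partition $0=t_0<t_1<\dots<t_v=T$ is essentially $\delta$-sparse if $t_i-t_{i-1}>\delta$ for $1\le i<v$; the modified modulus of continuity is $w'_T(x,\delta)=\inf\max_{1\le i\le v}w(x,[t_{i-1},t_i))$, the infimum over all essentially $\delta$-sparse partitions of $[0,T)$. *)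

theory Defs
  imports "HOL-Probability.Probability" "HOL-Computational_Algebra.Primes"
begin

definition pval :: "nat \<Rightarrow> rat \<Rightarrow> int" where
  "pval p x = (case quotient_of x of (a, d) \<Rightarrow>
      int (multiplicity (int p) a) - int (multiplicity (int p) d))"

definition padic_abs :: "nat \<Rightarrow> rat \<Rightarrow> real" where
  "padic_abs p x = (if x = 0 then 0 else real p powr (- real_of_int (pval p x)))"

text \<open>G_p = numbers sum_{k<0} a_k p^k with finitely many digits, i.e. rationals in [0,1)
 whose reduced denominator is a power of p. The group law is addition modulo 1 (frac).\<close>

definition Gp :: "nat \<Rightarrow> rat set" where
  "Gp p = {x. 0 \<le> x \<and> x < 1 \<and> (\<exists>k::nat. snd (quotient_of x) = int p ^ k)}"

text \<open>Law of X^(p): P(|X|_p = p^k) = (p^b-1) p^(-kb), uniform on {x in G_p. |x|_p = p^k},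
 a set of cardinality p^k - p^(k-1).\<close>

definition Xfun :: "real \<Rightarrow> nat \<Rightarrow> rat \<Rightarrow> real" where
  "Xfun b p x = (if x \<in> Gp p \<and> x \<noteq> 0 then
      (real p powr b - 1) * (padic_abs p x) powr (- b)
        / (padic_abs p x - padic_abs p x / real p)
    else 0)"

definition Xdist :: "real \<Rightarrow> nat \<Rightarrow> rat pmf" where
  "Xdist b p = embed_pmf (Xfun b p)"

text \<open>Probability space carrying all X^(p)_i, i.i.d. in i and independent in p:
 coordinate (p,i) of the outcome is X^(p)_(i+1).\<close>

definition Pspace :: "real \<Rightarrow> (nat \<times> nat \<Rightarrow> rat) measure" where
  "Pspace b = PiM UNIV (\<lambda>(p, i). measure_pmf (Xdist b p))"

definition Ssum :: "(nat \<times> nat \<Rightarrow> rat) \<Rightarrow> nat \<Rightarrow> nat \<Rightarrow> rat" where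
  "Ssum \<omega> p n = frac (\<Sum>i<n. \<omega> (p, i))"

definition Dconst :: "real \<Rightarrow> (nat \<Rightarrow> real) \<Rightarrow> nat \<Rightarrow> real" where
  "Dconst b \<sigma> p = real p powr b * (real p - 1) / (real p powr (b + 1) - 1) * \<sigma> p"

definition adelic_path :: "real \<Rightarrow> (nat \<Rightarrow> real) \<Rightarrow> nat \<Rightarrow> (nat \<times> nat \<Rightarrow> rat)
    \<Rightarrow> nat \<Rightarrow> real \<Rightarrow> rat" where
  "adelic_path b \<sigma> m \<omega> p t =
     of_nat p ^ m * Ssum \<omega> p (nat \<lfloor>Dconst b \<sigma> p * real p powr (real m * b) * t\<rfloor>)"

definition osc :: "(nat \<Rightarrow> real \<Rightarrow> rat) \<Rightarrow> real set \<Rightarrow> ereal" where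
  "osc x I = (SUP st \<in> I \<times> I. SUP p \<in> {p. prime p}.
       ereal (padic_abs p (x p (fst st) - x p (snd st)) / real p))"

definition ess_sparse_partition :: "real \<Rightarrow> real \<Rightarrow> nat \<Rightarrow> (nat \<Rightarrow> real) \<Rightarrow> bool" where
  "ess_sparse_partition T \<delta> v t \<longleftrightarrow> v \<ge> 1 \<and> t 0 = 0 \<and> t v = T \<and>
     (\<forall>i\<in>{1..v}. t (i - 1) < t i) \<and> (\<forall>i. 1 \<le> i \<and> i < v \<longrightarrow> t i - t (i - 1) > \<delta>)"

definition mod_cont' :: "real \<Rightarrow> (nat \<Rightarrow> real \<Rightarrow> rat) \<Rightarrow> real \<Rightarrow> ereal" where
  "mod_cont' T x \<delta> = (INF vt \<in> {(v, t). ess_sparse_partition T \<delta> v t}.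
       Max ((\<lambda>i. osc x {snd vt (i - 1)..<snd vt i}) ` {1..fst vt}))"

definition outer_prob :: "'a measure \<Rightarrow> 'a set \<Rightarrow> real" where
  "outer_prob M A = Inf (measure M ` {B \<in> sets M. A \<subseteq> B})"

end

(*
  Component p of the rescaled path jumps at the times (i+1)/r_p with r_p = D_p p^(mb), and a
  single jump is big (adelic size at least lam/2) with probability at most (2/lam)^b p^(-mb).
  Hence big jumps of component p occur with intensity at most (2/lam)^b sigma_p, uniformly in m.
  By the ultrametric inequality the path moves by at most lam/2 on every time interval without a
  big jump, once m is so large that the wrap-around modulo Z_p (of size at most 2^(-m)) is
  negligible. So w'_T(x, delta) < lam unless a big jump occurs before delta or two big jumps
  occur within delta of each other before T, and by independence the expected number of such
  jumps and pairs is O(delta) + O(2^(-mb)).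
*)

theory Submission
  imports Defs "HOL-Number_Theory.Totient"
begin

subsection \<open>The p-adic valuation and absolute value on the rationals\<close>

lemma multiplicity_add_ge_min:
  fixes q u v :: "'a :: factorial_semiring"
  assumes "\<not> is_unit q" and "u + v \<noteq> 0"
  shows "min (multiplicity q u) (multiplicity q v) \<le> multiplicity q (u + v)"
proof (rule multiplicity_geI[OF assms(2,1)])
  show "q ^ min (multiplicity q u) (multiplicity q v) dvd u + v"
    by (intro dvd_add multiplicity_dvd') auto
qed

lemma rat_nonzero_int_fraction:
  assumes "(x :: rat) \<noteq> 0"
  obtains a d where "a \<noteq> 0" "d \<noteq> 0" "x = of_int a / of_int d"
proof (cases x rule: Rat_cases_nonzero)
  case (Fract a d)
  then show ?thesis using that[of a d] by (simp add: Fract_of_int_quotient)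
qed (use assms in simp)

lemma pval_of_int_divide:
  assumes p: "prime p" and "a \<noteq> 0" and "d \<noteq> 0"
  shows "pval p (of_int a / of_int d) = int (multiplicity (int p) a) - int (multiplicity (int p) d)"
proof -
  obtain a' d' where q: "quotient_of (of_int a / of_int d) = (a', d')"
    by (cases "quotient_of (of_int a / of_int d)")
  have "d' > 0" using quotient_of_denom_pos[OF q] .
  moreover have "(of_int a / of_int d :: rat) = of_int a' / of_int d'"
    using quotient_of_div[OF q] .
  ultimately have "of_int (a' * d) = (of_int (a * d') :: rat)"
    using assms by (simp add: field_simps)
  then have cross: "a' * d = a * d'" by (simp only: of_int_eq_iff)
  with assms \<open>d' > 0\<close> have "a' \<noteq> 0" by auto
  have "prime (int p)" using p by simp
  with cross assms \<open>a' \<noteq> 0\<close> \<open>d' > 0\<close>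
  have "multiplicity (int p) a' + multiplicity (int p) d = multiplicity (int p) a + multiplicity (int p) d'"
    by (metis prime_elem_multiplicity_mult_distrib prime_imp_prime_elem less_irrefl)
  then show ?thesis unfolding pval_def q by simp
qed

lemma pval_mult:
  assumes p: "prime p" and x: "x \<noteq> 0" and y: "y \<noteq> 0"
  shows "pval p (x * y) = pval p x + pval p y"
proof -
  obtain a d where ad: "a \<noteq> 0" "d \<noteq> 0" "x = of_int a / of_int d"
    using rat_nonzero_int_fraction[OF x] .
  obtain a' d' where ad': "a' \<noteq> 0" "d' \<noteq> 0" "y = of_int a' / of_int d'"
    using rat_nonzero_int_fraction[OF y] .
  have "pval p (x * y) = pval p (of_int (a * a') / of_int (d * d'))"
    using ad ad' by simp
  also have "\<dots> = int (multiplicity (int p) (a * a')) - int (multiplicity (int p) (d * d'))"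
    by (rule pval_of_int_divide) (use ad ad' p in auto)
  finally show ?thesis
    using ad ad' p by (simp add: pval_of_int_divide prime_elem_multiplicity_mult_distrib)
qed

lemma pval_add_ge_min:
  assumes p: "prime p" and x: "x \<noteq> 0" and y: "y \<noteq> 0" and xy: "x + y \<noteq> 0"
  shows "min (pval p x) (pval p y) \<le> pval p (x + y)"
proof -
  obtain a d where ad: "a \<noteq> 0" "d \<noteq> 0" "x = of_int a / of_int d"
    using rat_nonzero_int_fraction[OF x] .
  obtain a' d' where ad': "a' \<noteq> 0" "d' \<noteq> 0" "y = of_int a' / of_int d'"
    using rat_nonzero_int_fraction[OF y] .
  have sum: "x + y = of_int (a * d' + a' * d) / of_int (d * d')"
    using ad ad' by (simp add: field_simps)
  with xy have num: "a * d' + a' * d \<noteq> 0"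
    by (metis of_int_0 div_0)
  have "prime (int p)" using p by simp
  then have "\<not> is_unit (int p)" using not_prime_unit by blast
  from multiplicity_add_ge_min[OF this num] ad ad' p
  have "min (multiplicity (int p) a + multiplicity (int p) d') (multiplicity (int p) a' + multiplicity (int p) d)
          \<le> multiplicity (int p) (a * d' + a' * d)"
    by (simp add: prime_elem_multiplicity_mult_distrib)
  moreover have "pval p (x + y) = int (multiplicity (int p) (a * d' + a' * d)) - int (multiplicity (int p) (d * d'))"
    unfolding sum by (rule pval_of_int_divide) (use ad ad' num p in auto)
  ultimately show ?thesis
    using ad ad' p by (simp add: pval_of_int_divide prime_elem_multiplicity_mult_distrib)
qed

lemma pval_of_int_nonneg: "prime p \<Longrightarrow> z \<noteq> 0 \<Longrightarrow> 0 \<le> pval p (of_int z)"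
  using pval_of_int_divide[of p z 1] by simp

lemma pval_prime_power: "prime p \<Longrightarrow> pval p (of_nat p ^ m) = int m"
  using pval_of_int_divide[of p "int p ^ m" 1] by (simp add: prime_gt_0_nat)

lemma pval_minus: "prime p \<Longrightarrow> x \<noteq> 0 \<Longrightarrow> pval p (- x) = pval p x"
  using pval_mult[of p "-1" x] pval_of_int_divide[of p "-1" 1] by (simp add: multiplicity_unit_right)

lemma padic_abs_nonneg: "0 \<le> padic_abs p x"
  by (simp add: padic_abs_def)

lemma padic_abs_0 [simp]: "padic_abs p 0 = 0"
  by (simp add: padic_abs_def)

lemma padic_abs_minus: "prime p \<Longrightarrow> padic_abs p (- x) = padic_abs p x"
  by (cases "x = 0") (auto simp: padic_abs_def pval_minus)

lemma padic_abs_add_le_max: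
  assumes p: "prime p"
  shows "padic_abs p (x + y) \<le> max (padic_abs p x) (padic_abs p y)"
proof (cases "x = 0 \<or> y = 0 \<or> x + y = 0")
  case True
  then show ?thesis using padic_abs_nonneg[of p] by (auto simp: max_def)
next
  case False
  have "real p > 1" using prime_gt_1_nat[OF p] by simp
  moreover have "min (pval p x) (pval p y) \<le> pval p (x + y)"
    using pval_add_ge_min[OF p] False by blast
  ultimately have "real p powr (- real_of_int (pval p (x + y)))
      \<le> real p powr (- real_of_int (min (pval p x) (pval p y)))"
    by (intro powr_mono) auto
  also have "\<dots> = max (real p powr (- real_of_int (pval p x))) (real p powr (- real_of_int (pval p y)))"
    using \<open>real p > 1\<close> by (simp add: min_def max_def)
  finally show ?thesis
    using False by (simp add: padic_abs_def)
qed

lemma padic_abs_sum_le: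
  assumes p: "prime p" and "0 \<le> c" and "\<And>j. j \<in> F \<Longrightarrow> padic_abs p (f j) \<le> c"
  shows "padic_abs p (\<Sum>j\<in>F. f j) \<le> c"
  using assms(3)
proof (induction F rule: infinite_finite_induct)
  case (insert x F)
  then have "max (padic_abs p (f x)) (padic_abs p (\<Sum>j\<in>F. f j)) \<le> c" by simp
  moreover have "padic_abs p (f x + (\<Sum>j\<in>F. f j)) \<le> max (padic_abs p (f x)) (padic_abs p (\<Sum>j\<in>F. f j))"
    by (rule padic_abs_add_le_max[OF p])
  ultimately show ?case
    using insert.hyps by (simp add: order_trans)
qed (use assms(2) in auto)

lemma padic_abs_prime_power_mult:
  assumes p: "prime p"
  shows "padic_abs p (of_nat p ^ m * x) = real p powr (- real m) * padic_abs p x"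
proof (cases "x = 0")
  case False
  have "(of_nat p ^ m :: rat) \<noteq> 0" "real p > 0" using p by (simp_all add: prime_gt_0_nat)
  with False show ?thesis
    by (simp add: padic_abs_def pval_mult[OF p] pval_prime_power[OF p] powr_add[symmetric])
qed simp

lemma padic_abs_of_int_le_1:
  assumes p: "prime p"
  shows "padic_abs p (of_int z) \<le> 1"
proof (cases "z = 0")
  case False
  have "real p \<ge> 1" using prime_gt_1_nat[OF p] by simp
  with pval_of_int_nonneg[OF p False]
  have "real p powr (- real_of_int (pval p (of_int z))) \<le> real p powr 0"
    by (intro powr_mono) auto
  then show ?thesis using \<open>real p \<ge> 1\<close> by (simp add: padic_abs_def)
qed simp

lemma padic_abs_prime_power_mult_of_int_le:
  assumes p: "prime p"
  shows "padic_abs p (of_nat p ^ m * of_int z) \<le> (1/2) ^ m"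
proof -
  have p1: "real p > 1" using prime_gt_1_nat[OF p] by simp
  have "padic_abs p (of_nat p ^ m * of_int z) \<le> real p powr - real m"
    using padic_abs_of_int_le_1[OF p, of z] p1 by (simp add: padic_abs_prime_power_mult[OF p])
  also have "real p powr - real m = (1 / real p) ^ m"
    using p1 by (simp add: powr_minus powr_realpow power_divide divide_inverse power_inverse)
  also have "\<dots> \<le> (1/2) ^ m"
    using prime_ge_2_nat[OF p] by (intro power_mono) (auto simp: field_simps)
  finally show ?thesis .
qed

subsection \<open>The law of the increments\<close>

definition Gp_level :: "nat \<Rightarrow> nat \<Rightarrow> rat set" where
  "Gp_level p k = {x. 0 \<le> x \<and> x < 1 \<and> snd (quotient_of x) = int p ^ k}"

lemma quotient_of_coprime_divide:
  assumes "d > 0" "coprime a d"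
  shows "quotient_of (of_int a / of_int d) = (a, d)"
  using assms by (simp add: Fract_of_int_quotient[symmetric] quotient_of_Fract)

lemma Gp_level_eq_image_totatives:
  assumes p: "prime p" and k: "k \<ge> 1"
  shows "Gp_level p k = (\<lambda>a. of_nat a / of_nat (p ^ k)) ` totatives (p ^ k)"
proof
  have pk: "p ^ k > 1" using one_less_power[OF prime_gt_1_nat[OF p], of k] k by simp
  show "(\<lambda>a. of_nat a / of_nat (p ^ k)) ` totatives (p ^ k) \<subseteq> Gp_level p k"
  proof clarify
    fix a assume a: "a \<in> totatives (p ^ k)"
    then have "coprime (int a) (int p ^ k)" "0 < a" "a \<le> p ^ k"
      by (auto simp: in_totatives_iff simp flip: of_nat_power)
    moreover have "a \<noteq> p ^ k"
    proof
      assume "a = p ^ k"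
      with a have "coprime (p ^ k) (p ^ k)" by (simp add: in_totatives_iff)
      with pk show False by (metis coprime_self is_unit_power_iff less_irrefl nat_dvd_1_iff_1)
    qed
    ultimately have "coprime (int a) (int p ^ k)" "0 < a" "a < p ^ k" by auto
    then have "quotient_of (of_int (int a) / of_int (int p ^ k)) = (int a, int p ^ k)"
      using prime_gt_0_nat[OF p] by (intro quotient_of_coprime_divide) auto
    with \<open>a < p ^ k\<close> show "of_nat a / of_nat (p ^ k) \<in> Gp_level p k"
      by (simp add: Gp_level_def divide_less_eq)
  qed
  show "Gp_level p k \<subseteq> (\<lambda>a. of_nat a / of_nat (p ^ k)) ` totatives (p ^ k)"
  proof
    fix x :: rat assume "x \<in> Gp_level p k"
    then have x: "0 \<le> x" "x < 1" "snd (quotient_of x) = int p ^ k" by (auto simp: Gp_level_def)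
    obtain a D where q: "quotient_of x = (a, D)" by (cases "quotient_of x")
    have D: "D = int p ^ k" "D > 0" using x(3) q quotient_of_denom_pos[OF q] by auto
    have x_eq: "x = of_int a / of_int D" using quotient_of_div[OF q] .
    with x D(2) have "0 \<le> a" "a < D"
      by (simp_all add: zero_le_divide_iff divide_less_eq)
    moreover have "a \<noteq> 0"
      using quotient_of_coprime[OF q] pk D(1) by (auto simp flip: of_nat_power)
    moreover have "coprime (nat a) (p ^ k)"
      using quotient_of_coprime[OF q] \<open>0 \<le> a\<close> D(1) by (simp add: coprime_int_iff[symmetric])
    ultimately have "nat a \<in> totatives (p ^ k)"
      using D(1) by (auto simp: in_totatives_iff simp flip: of_nat_power)
    moreover have "x = of_nat (nat a) / of_nat (p ^ k)" using x_eq \<open>0 \<le> a\<close> D(1) by simp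
    ultimately show "x \<in> (\<lambda>a. of_nat a / of_nat (p ^ k)) ` totatives (p ^ k)" by blast
  qed
qed

lemma
  assumes p: "prime p" and k: "k \<ge> 1"
  shows finite_Gp_level: "finite (Gp_level p k)"
    and card_Gp_level: "card (Gp_level p k) = p ^ (k - 1) * (p - 1)"
proof -
  have "inj_on (\<lambda>a. of_nat a / of_nat (p ^ k) :: rat) (totatives (p ^ k))"
    using p by (auto simp: inj_on_def prime_gt_0_nat)
  then show "finite (Gp_level p k)" "card (Gp_level p k) = p ^ (k - 1) * (p - 1)"
    using totient_prime_power[OF p, of k] k
    by (simp_all add: Gp_level_eq_image_totatives[OF p k] card_image totient_def)
qed

lemma
  assumes p: "prime p" and k: "k \<ge> 1" and x: "x \<in> Gp_level p k"
  shows Gp_level_in_Gp: "x \<in> Gp p" "x \<noteq> 0"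
    and padic_abs_Gp_level: "padic_abs p x = real p ^ k"
proof -
  have p1: "p > 1" using prime_gt_1_nat[OF p] .
  have pk: "p ^ k > 1" using one_less_power[OF p1, of k] k by simp
  have x': "0 \<le> x" "x < 1" "snd (quotient_of x) = int p ^ k" using x by (auto simp: Gp_level_def)
  then show "x \<in> Gp p" unfolding Gp_def by blast
  obtain a where q: "quotient_of x = (a, int p ^ k)"
    using x'(3) by (cases "quotient_of x") auto
  show x0: "x \<noteq> 0"
    using q pk by (auto simp flip: of_nat_power)
  have "prime (int p)" using p by simp
  have "\<not> int p dvd a"
  proof
    assume "int p dvd a"
    moreover have "int p dvd int p ^ k" using k by (simp add: dvd_power)
    ultimately have "is_unit (int p)" using quotient_of_coprime[OF q] by (meson coprime_common_divisor)
    with \<open>prime (int p)\<close> show False by (simp add: not_prime_unit)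
  qed
  then have "pval p x = - int k"
    using \<open>prime (int p)\<close> by (simp add: pval_def q not_dvd_imp_multiplicity_0)
  then show "padic_abs p x = real p ^ k"
    using x0 p1 by (simp add: padic_abs_def powr_realpow)
qed

lemma Gp_nonzero_in_level:
  assumes "x \<in> Gp p" "x \<noteq> 0"
  obtains k where "k \<ge> 1" "x \<in> Gp_level p k"
proof -
  obtain k where x: "0 \<le> x" "x < 1" "snd (quotient_of x) = int p ^ k"
    using assms(1) by (auto simp: Gp_def)
  obtain a where q: "quotient_of x = (a, int p ^ k)"
    using x(3) by (cases "quotient_of x") auto
  have "k \<noteq> 0"
  proof
    assume "k = 0"
    then have "x = of_int a" using quotient_of_div[OF q] by simp
    with x have "0 \<le> a" "a < 1" by simp_all
    with \<open>x = of_int a\<close> assms(2) show False by simp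
  qed
  with x show ?thesis by (intro that[of k]) (auto simp: Gp_level_def)
qed

lemma Gp_level_unique:
  assumes p: "prime p" and "x \<in> Gp_level p k" "x \<in> Gp_level p j"
  shows "k = j"
proof -
  have "int p ^ k = int p ^ j" using assms by (auto simp: Gp_level_def)
  moreover have "int p > 1" using prime_gt_1_nat[OF p] by simp
  ultimately show ?thesis by (simp add: power_inject_exp)
qed

lemma realpow_powr: "0 < x \<Longrightarrow> (x ^ n) powr a = (x powr a) ^ n" for x :: real
  by (simp add: powr_realpow[symmetric] powr_powr powr_power mult.commute)

lemma power_Suc_ge_threshold:
  fixes x c :: real
  assumes "x > 1"
  obtains j where "\<And>k. c \<le> x ^ Suc k \<longleftrightarrow> j \<le> k"
proof -
  have "\<exists>k. c \<le> x ^ Suc k"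
  proof -
    obtain k where "c < x ^ k" using real_arch_pow[OF assms] by blast
    also have "\<dots> \<le> x ^ Suc k" using assms by (intro power_increasing) auto
    finally show ?thesis by (intro exI[of _ k]) simp
  qed
  define j where "j = (LEAST k. c \<le> x ^ Suc k)"
  have j: "c \<le> x ^ Suc j" unfolding j_def by (rule LeastI_ex) fact
  show ?thesis
  proof (rule that, rule iffI)
    show "c \<le> x ^ Suc k \<Longrightarrow> j \<le> k" for k unfolding j_def by (rule Least_le)
    show "j \<le> k \<Longrightarrow> c \<le> x ^ Suc k" for k
      using j assms by (meson Suc_le_mono order_trans power_increasing less_imp_le)
  qed
qed

definition level_prob :: "real \<Rightarrow> nat \<Rightarrow> nat \<Rightarrow> real" where
  "level_prob b p k = (real p powr b - 1) * (real p powr - b) ^ k"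

lemma level_prob_nonneg: "prime p \<Longrightarrow> 0 \<le> b \<Longrightarrow> 0 \<le> level_prob b p k"
  using prime_gt_1_nat[of p] by (simp add: level_prob_def ge_one_powr_ge_zero)

lemma level_prob_tail_sums:
  assumes p: "prime p" and b: "b > 0"
  shows "(\<lambda>k. if j \<le> k then level_prob b p (Suc k) else 0) sums ((real p powr - b) ^ j)"
proof -
  have p1: "real p > 1" using prime_gt_1_nat[OF p] by simp
  define x where "x = real p powr - b"
  have x: "0 < x" "x < 1" using p1 b by (simp_all add: x_def powr_less_one)
  have "real p powr b * x = 1" using p1 by (simp add: x_def powr_minus)
  then have coeff: "(real p powr b - 1) * x ^ Suc j = (1 - x) * x ^ j"
    by (simp add: algebra_simps)
  have "level_prob b p (Suc (k + j)) = ((real p powr b - 1) * x ^ Suc j) * x ^ k" for k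
    by (simp add: level_prob_def x_def power_add mult_ac)
  also have "((real p powr b - 1) * x ^ Suc j) * x ^ k = ((1 - x) * x ^ j) * x ^ k" for k
    by (simp only: coeff)
  finally have "(\<lambda>k. level_prob b p (Suc (k + j))) = (\<lambda>k. ((1 - x) * x ^ j) * x ^ k)" by simp
  moreover have "(\<lambda>k. ((1 - x) * x ^ j) * x ^ k) sums (((1 - x) * x ^ j) * (1 / (1 - x)))"
    using geometric_sums[of x] x by (intro sums_mult) simp
  ultimately have "(\<lambda>k. level_prob b p (Suc (k + j))) sums (x ^ j)" using x by simp
  then show ?thesis
    using sums_iff_shift[of "\<lambda>k. if j \<le> k then level_prob b p (Suc k) else 0" j] by (simp add: x_def)
qed

lemma Xfun_Gp_level:
  assumes p: "prime p" and k: "k \<ge> 1" and x: "x \<in> Gp_level p k"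
  shows "Xfun b p x = level_prob b p k / real (card (Gp_level p k))"
proof -
  have p1: "real p > 1" using prime_gt_1_nat[OF p] by simp
  have "real (card (Gp_level p k)) = real p ^ (k - 1) * (real p - 1)"
    using card_Gp_level[OF p k] p1 by (simp add: of_nat_diff)
  also have "\<dots> = real p ^ k - real p ^ k / real p"
    using k p1 by (cases k) (auto simp: field_simps)
  finally have "real (card (Gp_level p k)) = real p ^ k - real p ^ k / real p" .
  moreover have "(real p ^ k) powr - b = (real p powr - b) ^ k"
    using p1 by (simp add: realpow_powr)
  ultimately show ?thesis
    using Gp_level_in_Gp[OF p k x] padic_abs_Gp_level[OF p k x]
    by (simp add: Xfun_def level_prob_def)
qed

lemma Xfun_nonneg:
  assumes p: "prime p" and b: "0 \<le> b"
  shows "0 \<le> Xfun b p x"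
proof (cases "x \<in> Gp p \<and> x \<noteq> 0")
  case True
  then obtain k where "k \<ge> 1" "x \<in> Gp_level p k" using Gp_nonzero_in_level by blast
  then show ?thesis using Xfun_Gp_level[OF p] level_prob_nonneg[OF p b] by simp
qed (auto simp: Xfun_def)

lemma nn_integral_Xfun_padic_abs:
  assumes p: "prime p" and b: "0 \<le> b"
  shows "(\<integral>\<^sup>+x. ennreal (Xfun b p x) * f (padic_abs p x) \<partial>count_space UNIV)
       = (\<Sum>k. ennreal (level_prob b p (Suc k)) * f (real p ^ Suc k))"
proof -
  let ?L = "\<lambda>k. Gp_level p (Suc k)"
  have pointwise: "ennreal (Xfun b p x) * f (padic_abs p x)
      = (\<Sum>k. ennreal (Xfun b p x) * f (real p ^ Suc k) * indicator (?L k) x)" for x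
  proof (cases "x \<in> Gp p \<and> x \<noteq> 0")
    case True
    then obtain k where "k \<ge> 1" "x \<in> Gp_level p k"
      using Gp_nonzero_in_level[of x p] by blast
    then obtain j where j: "x \<in> ?L j" by (cases k) auto
    then have "(\<Sum>k. ennreal (Xfun b p x) * f (real p ^ Suc k) * indicator (?L k) x)
        = (\<Sum>k\<in>{j}. ennreal (Xfun b p x) * f (real p ^ Suc k) * indicator (?L k) x)"
      using Gp_level_unique[OF p] by (intro suminf_finite) (auto split: split_indicator)
    with j show ?thesis using padic_abs_Gp_level[OF p _ j] by simp
  qed (auto simp: Xfun_def)
  have level: "(\<integral>\<^sup>+x. ennreal (Xfun b p x) * f (real p ^ Suc k) * indicator (?L k) x \<partial>count_space UNIV)
      = ennreal (level_prob b p (Suc k)) * f (real p ^ Suc k)" for k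
  proof -
    let ?c = "level_prob b p (Suc k) / real (card (?L k))"
    have "card (?L k) > 0"
      using card_Gp_level[OF p, of "Suc k"] prime_gt_1_nat[OF p] by simp
    then have card: "ennreal ?c * of_nat (card (?L k)) = ennreal (level_prob b p (Suc k))"
      using level_prob_nonneg[OF p b]
      by (simp add: ennreal_of_nat_eq_real_of_nat ennreal_mult''[symmetric])
    have "(\<integral>\<^sup>+x. ennreal (Xfun b p x) * f (real p ^ Suc k) * indicator (?L k) x \<partial>count_space UNIV)
        = (\<integral>\<^sup>+x. (ennreal ?c * f (real p ^ Suc k)) * indicator (?L k) x \<partial>count_space UNIV)"
      by (intro nn_integral_cong) (auto split: split_indicator simp: Xfun_Gp_level[OF p, of "Suc k"])
    also have "\<dots> = (ennreal ?c * f (real p ^ Suc k)) * of_nat (card (?L k))"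
      using finite_Gp_level[OF p, of "Suc k"] by (subst nn_integral_cmult_indicator) auto
    finally show ?thesis
      by (metis mult.commute mult.left_commute card)
  qed
  have "(\<integral>\<^sup>+x. ennreal (Xfun b p x) * f (padic_abs p x) \<partial>count_space UNIV)
      = (\<integral>\<^sup>+x. (\<Sum>k. ennreal (Xfun b p x) * f (real p ^ Suc k) * indicator (?L k) x) \<partial>count_space UNIV)"
    by (simp only: pointwise)
  also have "\<dots> = (\<Sum>k. \<integral>\<^sup>+x. ennreal (Xfun b p x) * f (real p ^ Suc k) * indicator (?L k) x \<partial>count_space UNIV)"
    by (rule nn_integral_suminf) simp
  finally show ?thesis by (simp only: level)
qed

lemma pmf_Xdist:
  assumes p: "prime p" and b: "b > 0"
  shows "pmf (Xdist b p) x = Xfun b p x"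
proof -
  have "(\<integral>\<^sup>+x. ennreal (Xfun b p x) * 1 \<partial>count_space UNIV) = (\<Sum>k. ennreal (level_prob b p (Suc k)))"
    using nn_integral_Xfun_padic_abs[OF p, of b "\<lambda>_. 1"] b by simp
  also have "\<dots> = 1"
    using suminf_ennreal_eq[OF level_prob_nonneg[OF p] level_prob_tail_sums[OF p b, of 0, simplified]] b
    by simp
  finally show ?thesis
    unfolding Xdist_def using Xfun_nonneg[OF p] b by (intro pmf_embed_pmf) auto
qed

lemma nn_integral_Xdist_padic_abs:
  assumes p: "prime p" and b: "b > 0"
  shows "(\<integral>\<^sup>+x. f (padic_abs p x) \<partial>Xdist b p)
       = (\<Sum>k. ennreal (level_prob b p (Suc k)) * f (real p ^ Suc k))"
  using nn_integral_Xfun_padic_abs[OF p, of b f] b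
  by (simp add: nn_integral_measure_pmf pmf_Xdist[OF p b])

lemma emeasure_Xdist_padic_abs_ge:
  assumes p: "prime p" and b: "b > 0" and c: "c > 0"
  shows "emeasure (Xdist b p) {x. c \<le> padic_abs p x} \<le> ennreal (real p powr b * c powr - b)"
proof -
  have p1: "real p > 1" using prime_gt_1_nat[OF p] by simp
  obtain j where above: "\<And>k. c \<le> real p ^ Suc k \<longleftrightarrow> j \<le> k"
    using power_Suc_ge_threshold[OF p1, where c=c] by blast
  then have j: "c \<le> real p ^ Suc j" by simp
  define t where "t k = (if j \<le> k then level_prob b p (Suc k) else 0)" for k
  have t_sums: "t sums ((real p powr - b) ^ j)"
    unfolding t_def by (rule level_prob_tail_sums[OF p b])
  have "emeasure (Xdist b p) {x. c \<le> padic_abs p x} = (\<integral>\<^sup>+x. indicator {y. c \<le> y} (padic_abs p x) \<partial>Xdist b p)"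
    by (simp add: nn_integral_indicator[symmetric] indicator_def)
  also have "\<dots> = (\<Sum>k. ennreal (t k))"
    unfolding nn_integral_Xdist_padic_abs[OF p b] t_def
    by (intro suminf_cong) (simp add: indicator_def above[symmetric] del: power_Suc)
  also have "\<dots> = ennreal ((real p powr - b) ^ j)"
    using level_prob_nonneg[OF p] b by (intro suminf_ennreal_eq t_sums) (simp add: t_def)
  also have "(real p powr - b) ^ j = real p powr b * (real p ^ Suc j) powr - b"
  proof -
    have "(real p ^ Suc j) powr - b = (real p powr - b) ^ Suc j"
      using p1 by (simp add: realpow_powr del: power_Suc)
    then have "real p powr b * (real p ^ Suc j) powr - b
        = (real p powr b * real p powr - b) * (real p powr - b) ^ j"
      by (simp add: mult.assoc)
    also have "real p powr b * real p powr - b = 1" using p1 by (simp add: powr_minus)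
    finally show ?thesis by simp
  qed
  also have "\<dots> \<le> real p powr b * c powr - b"
    using c j b by (intro mult_left_mono powr_mono2') auto
  finally show ?thesis by (simp add: ennreal_leI)
qed

definition big_jumps :: "nat \<Rightarrow> nat \<Rightarrow> real \<Rightarrow> rat set" where
  "big_jumps p m lam = {x. real p * lam / 2 \<le> padic_abs p (of_nat p ^ m * x)}"

lemma emeasure_Xdist_big_jumps:
  assumes p: "prime p" and b: "b > 0" and lam: "lam > 0"
  shows "emeasure (Xdist b p) (big_jumps p m lam) \<le> ennreal ((2 / lam) powr b * real p powr - (real m * b))"
proof -
  have p1: "real p > 1" using prime_gt_1_nat[OF p] by simp
  define c where "c = real p ^ Suc m * (lam / 2)"
  have "c > 0" using p1 lam by (simp add: c_def)
  have "real p powr - real m = 1 / real p ^ m"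
    using p1 by (simp add: powr_minus powr_realpow divide_inverse)
  then have "padic_abs p (of_nat p ^ m * x) = padic_abs p x / real p ^ m" for x
    by (simp add: padic_abs_prime_power_mult[OF p])
  then have "big_jumps p m lam = {x. c \<le> padic_abs p x}"
    using p1 by (simp add: big_jumps_def le_divide_eq c_def mult_ac)
  then have "emeasure (Xdist b p) (big_jumps p m lam) \<le> ennreal (real p powr b * c powr - b)"
    using emeasure_Xdist_padic_abs_ge[OF p b \<open>c > 0\<close>] by simp
  also have "real p powr b * c powr - b = (2 / lam) powr b * real p powr - (real m * b)"
  proof -
    have "c powr - b = (real p ^ Suc m) powr - b * (lam / 2) powr - b"
      unfolding c_def using p1 lam by (intro powr_mult)
    also have "(real p ^ Suc m) powr - b = (real p powr - b) ^ Suc m"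
      using p1 by (simp add: realpow_powr del: power_Suc)
    also have "(lam / 2) powr - b = (2 / lam) powr b"
      using lam by (simp add: powr_minus powr_divide field_simps)
    finally have "c powr - b = (real p powr - b) ^ Suc m * (2 / lam) powr b" .
    moreover have "real p powr b * (real p powr - b) ^ Suc m = real p powr - (real m * b)"
    proof -
      have "real p powr b * real p powr - b = 1" using p1 by (simp add: powr_minus)
      moreover have "(real p powr - b) ^ m = real p powr - (real m * b)"
        using p1 by (simp add: powr_power)
      ultimately show ?thesis by (metis mult.assoc mult_1 power_Suc)
    qed
    ultimately show ?thesis by (simp add: mult_ac)
  qed
  finally show ?thesis .
qed

subsection \<open>Essentially sparse partitions\<close>

lemma finite_if_separated:
  fixes \<Theta> :: "real set"
  assumes "\<delta> > 0" and "\<Theta> \<subseteq> {a..c}"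
    and sep: "\<And>x y. x \<in> \<Theta> \<Longrightarrow> y \<in> \<Theta> \<Longrightarrow> x \<noteq> y \<Longrightarrow> \<delta> < \<bar>x - y\<bar>"
  shows "finite \<Theta>"
proof -
  have "inj_on (\<lambda>x. \<lfloor>x / \<delta>\<rfloor>) \<Theta>"
  proof (rule inj_onI, rule ccontr)
    fix x y assume x: "x \<in> \<Theta>" and y: "y \<in> \<Theta>" and "\<lfloor>x / \<delta>\<rfloor> = \<lfloor>y / \<delta>\<rfloor>" and "x \<noteq> y"
    then have "\<bar>x / \<delta> - y / \<delta>\<bar> < 1" by linarith
    then have "\<bar>x - y\<bar> < \<delta>"
      using \<open>\<delta> > 0\<close> by (simp add: diff_divide_distrib[symmetric] abs_divide)
    with sep[OF x y \<open>x \<noteq> y\<close>] show False by simp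
  qed
  moreover have "(\<lambda>x. \<lfloor>x / \<delta>\<rfloor>) ` \<Theta> \<subseteq> {\<lfloor>a / \<delta>\<rfloor>..\<lfloor>c / \<delta>\<rfloor>}"
  proof clarify
    fix x assume "x \<in> \<Theta>"
    then have "a \<le> x" "x \<le> c" using assms(2) by auto
    then show "\<lfloor>x / \<delta>\<rfloor> \<in> {\<lfloor>a / \<delta>\<rfloor>..\<lfloor>c / \<delta>\<rfloor>}"
      using \<open>\<delta> > 0\<close> by (auto intro!: floor_mono divide_right_mono)
  qed
  ultimately show ?thesis
    by (meson finite_atLeastAtMost_int finite_imageD finite_subset)
qed

lemma ess_sparse_partition_mono:
  assumes "ess_sparse_partition T \<delta> v t" and "i \<le> j" and "j \<le> v"
  shows "t i \<le> t j"
  using assms(2,3)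
proof (induction j)
  case (Suc j)
  have "\<forall>i\<in>{1..v}. t (i - 1) < t i"
    using assms(1) by (simp add: ess_sparse_partition_def)
  then have "t j < t (Suc j)"
    using Suc.prems(2) by (metis One_nat_def atLeastAtMost_iff diff_Suc_1 le_add1 plus_1_eq_Suc)
  then show ?case
    using Suc by (cases "i = Suc j") auto
qed simp

lemma ess_sparse_partition_through_sorted:
  fixes xs :: "real list"
  assumes xs: "sorted_wrt (<) xs" "set xs \<subseteq> {\<delta><..<T}" and "0 \<le> \<delta>" "0 < T"
    and gaps: "\<And>k. Suc k < length xs \<Longrightarrow> \<delta> < xs ! Suc k - xs ! k"
  shows "ess_sparse_partition T \<delta> (Suc (length xs)) ((!) (0 # xs @ [T]))"
proof -
  define L where "L = 0 # xs @ [T]"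
  define v where "v = Suc (length xs)"
  have len: "length L = Suc v" by (simp add: L_def v_def)
  have L_sorted: "sorted_wrt (<) L"
    using xs \<open>0 \<le> \<delta>\<close> \<open>T > 0\<close> by (force simp: L_def sorted_wrt_append)
  have L_less: "L ! i < L ! j" if "i < j" "j \<le> v" for i j
    using sorted_wrt_nth_less[OF L_sorted that(1)] that(2) len by simp
  have gap: "\<delta> < L ! i - L ! (i - 1)" if "1 \<le> i" "i < v" for i
  proof (cases "i = 1")
    case True
    with that have "xs ! 0 \<in> {\<delta><..<T}" using xs(2) v_def nth_mem by fastforce
    with True that show ?thesis by (auto simp: L_def nth_append v_def)
  next
    case False
    define k where "k = i - 2"
    with that False have k: "i = Suc (Suc k)" "Suc k < length xs" by (auto simp: v_def)
    with gaps[of k] show ?thesis by (simp add: L_def nth_append)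
  qed
  have "ess_sparse_partition T \<delta> v ((!) L)"
    unfolding ess_sparse_partition_def using L_less gap
    by (auto simp: L_def v_def nth_append)
  then show ?thesis by (simp add: L_def v_def)
qed

lemma ess_sparse_partition_avoiding:
  fixes \<Theta> :: "real set"
  assumes "\<delta> > 0" and "T > 0" and \<Theta>: "\<Theta> \<subseteq> {\<delta><..<T}"
    and sep: "\<And>x y. x \<in> \<Theta> \<Longrightarrow> y \<in> \<Theta> \<Longrightarrow> x \<noteq> y \<Longrightarrow> \<delta> < \<bar>x - y\<bar>"
  obtains v t where "ess_sparse_partition T \<delta> v t"
    and "\<And>i \<theta>. i \<in> {1..v} \<Longrightarrow> \<theta> \<in> \<Theta> \<Longrightarrow> \<not> (t (i - 1) < \<theta> \<and> \<theta> < t i)"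
proof -
  have "finite \<Theta>"
  proof (rule finite_if_separated[OF \<open>\<delta> > 0\<close> _ sep])
    show "\<Theta> \<subseteq> {0..T}" using \<Theta> \<open>\<delta> > 0\<close> by auto
  qed
  define xs where "xs = sorted_list_of_set \<Theta>"
  have xs: "sorted_wrt (<) xs" "set xs = \<Theta>"
    using \<open>finite \<Theta>\<close> by (simp_all add: xs_def)
  define L where "L = 0 # xs @ [T]"
  define v where "v = Suc (length xs)"
  have "\<delta> < xs ! Suc k - xs ! k" if "Suc k < length xs" for k
  proof -
    have "xs ! k \<in> \<Theta>" "xs ! Suc k \<in> \<Theta>" "xs ! k < xs ! Suc k"
      using that xs by (auto intro: sorted_wrt_nth_less)
    with sep[of "xs ! Suc k" "xs ! k"] show ?thesis by simp
  qed
  then have part: "ess_sparse_partition T \<delta> v ((!) L)"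
    unfolding L_def v_def using xs \<Theta> \<open>\<delta> > 0\<close> \<open>T > 0\<close>
    by (intro ess_sparse_partition_through_sorted) auto
  moreover have "\<not> (L ! (i - 1) < \<theta> \<and> \<theta> < L ! i)" if "i \<in> {1..v}" "\<theta> \<in> \<Theta>" for i \<theta>
  proof -
    obtain k where "k < length xs" "\<theta> = xs ! k"
      using \<open>\<theta> \<in> \<Theta>\<close> xs(2) by (auto simp: in_set_conv_nth)
    then have k: "k < length xs" "\<theta> = L ! Suc k" by (simp_all add: L_def nth_append)
    show ?thesis
    proof (cases "Suc k \<le> i - 1")
      case True
      moreover have "i - 1 \<le> v" using that(1) by (simp, linarith)
      ultimately show ?thesis using ess_sparse_partition_mono[OF part] k(2) by fastforce
    next
      case False
      then have "i \<le> Suc k" "Suc k \<le> v" using k(1) by (auto simp: v_def)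
      then show ?thesis using ess_sparse_partition_mono[OF part] k(2) by fastforce
    qed
  qed
  ultimately show ?thesis by (rule that)
qed

subsection \<open>Paths without big jumps\<close>

definition jump_rate :: "real \<Rightarrow> (nat \<Rightarrow> real) \<Rightarrow> nat \<Rightarrow> nat \<Rightarrow> real" where
  "jump_rate b \<sigma> m p = Dconst b \<sigma> p * real p powr (real m * b)"

definition jump_time :: "real \<Rightarrow> (nat \<Rightarrow> real) \<Rightarrow> nat \<Rightarrow> nat \<times> nat \<Rightarrow> real" where
  "jump_time b \<sigma> m e = real (Suc (snd e)) / jump_rate b \<sigma> m (fst e)"

lemma adelic_path_jump_rate:
  "adelic_path b \<sigma> m \<omega> p t = of_nat p ^ m * Ssum \<omega> p (nat \<lfloor>jump_rate b \<sigma> m p * t\<rfloor>)"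
  by (simp add: adelic_path_def jump_rate_def)

lemma
  assumes p: "prime p" and b: "b > 0" and "0 \<le> \<sigma> p"
  shows Dconst_nonneg: "0 \<le> Dconst b \<sigma> p"
    and Dconst_le: "Dconst b \<sigma> p \<le> \<sigma> p"
proof -
  have p1: "real p > 1" using prime_gt_1_nat[OF p] by simp
  have pb: "real p powr b \<ge> 1" using p1 b by (simp add: ge_one_powr_ge_zero)
  have "real p powr (b + 1) = real p powr b * real p" using p1 by (simp add: powr_add)
  then have "0 < real p powr b * (real p - 1)" "real p powr b * (real p - 1) \<le> real p powr (b + 1) - 1"
    using pb p1 by (simp_all add: algebra_simps)
  then have ratio_nonneg: "0 \<le> real p powr b * (real p - 1) / (real p powr (b + 1) - 1)"
    and ratio_le_1: "real p powr b * (real p - 1) / (real p powr (b + 1) - 1) \<le> 1"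
    by (auto simp: divide_le_eq_1)
  show "0 \<le> Dconst b \<sigma> p"
    unfolding Dconst_def using ratio_nonneg \<open>0 \<le> \<sigma> p\<close> by (rule mult_nonneg_nonneg)
  show "Dconst b \<sigma> p \<le> \<sigma> p"
    unfolding Dconst_def using mult_right_mono[OF ratio_le_1 \<open>0 \<le> \<sigma> p\<close>] by simp
qed

lemma jump_rate_nonneg: "prime p \<Longrightarrow> b > 0 \<Longrightarrow> 0 \<le> \<sigma> p \<Longrightarrow> 0 \<le> jump_rate b \<sigma> m p"
  by (simp add: jump_rate_def Dconst_nonneg)

lemma frac_sum_diff:
  fixes f :: "nat \<Rightarrow> 'a :: floor_ceiling"
  assumes "k \<le> n"
  obtains z :: int where "frac (\<Sum>i<n. f i) - frac (\<Sum>i<k. f i) = (\<Sum>i\<in>{k..<n}. f i) + of_int z"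
proof -
  have "(\<Sum>i<n. f i) = (\<Sum>i<k. f i) + (\<Sum>i\<in>{k..<n}. f i)"
    using sum.atLeastLessThan_concat[of 0 k n f] assms by (simp add: atLeast0LessThan)
  then show ?thesis
    by (intro that[of "\<lfloor>\<Sum>i<k. f i\<rfloor> - \<lfloor>\<Sum>i<n. f i\<rfloor>"]) (simp add: frac_def)
qed

text \<open>Between two times, component p moves by the jumps in between plus an integer (the
  wrap-around modulo Z_p), which after scaling by p^m has p-adic size at most (1/2)^m.\<close>

lemma padic_abs_path_increment_le:
  assumes p: "prime p" and r: "r \<ge> 0" and u: "0 \<le> u" "u \<le> s"
    and m: "(1/2) ^ m \<le> lam" and lam: "lam > 0"
    and small: "\<And>j. u < real (Suc j) / r \<Longrightarrow> real (Suc j) / r \<le> s \<Longrightarrow> \<omega> (p, j) \<notin> big_jumps p m lam"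
  shows "padic_abs p (of_nat p ^ m * Ssum \<omega> p (nat \<lfloor>r * s\<rfloor>) - of_nat p ^ m * Ssum \<omega> p (nat \<lfloor>r * u\<rfloor>))
           \<le> real p * lam / 2"
proof -
  define k where "k = nat \<lfloor>r * u\<rfloor>"
  define n where "n = nat \<lfloor>r * s\<rfloor>"
  have "k \<le> n" unfolding k_def n_def using r u by (intro nat_mono floor_mono mult_left_mono)
  then obtain z where z: "Ssum \<omega> p n - Ssum \<omega> p k = (\<Sum>i\<in>{k..<n}. \<omega> (p, i)) + of_int z"
    unfolding Ssum_def by (rule frac_sum_diff)
  have jumps: "padic_abs p (\<Sum>i\<in>{k..<n}. of_nat p ^ m * \<omega> (p, i)) \<le> real p * lam / 2"
  proof (rule padic_abs_sum_le[OF p])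
    fix j assume j: "j \<in> {k..<n}"
    then have "r > 0" using r unfolding n_def by (cases "r = 0") auto
    moreover from j have "\<lfloor>r * u\<rfloor> < int (Suc j)" "int (Suc j) \<le> \<lfloor>r * s\<rfloor>"
      unfolding k_def n_def by (auto simp: nat_le_iff zless_nat_eq_int_zless)
    then have "r * u < real (Suc j)" "real (Suc j) \<le> r * s"
      by (simp_all add: floor_less_iff le_floor_iff)
    ultimately have "u < real (Suc j) / r" "real (Suc j) / r \<le> s"
      by (simp_all add: field_simps)
    from small[OF this] show "padic_abs p (of_nat p ^ m * \<omega> (p, j)) \<le> real p * lam / 2"
      by (simp add: big_jumps_def)
  qed (use lam in simp)
  have wrap: "padic_abs p (of_nat p ^ m * of_int z) \<le> real p * lam / 2"
  proof -
    have "real p \<ge> 2" using prime_ge_2_nat[OF p] by simp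
    then have "lam \<le> real p * lam / 2" using lam by (simp add: field_simps)
    then show ?thesis using padic_abs_prime_power_mult_of_int_le[OF p, of m z] m by linarith
  qed
  have "of_nat p ^ m * Ssum \<omega> p n - of_nat p ^ m * Ssum \<omega> p k
      = (\<Sum>i\<in>{k..<n}. of_nat p ^ m * \<omega> (p, i)) + of_nat p ^ m * of_int z"
    by (simp add: right_diff_distrib[symmetric] z sum_distrib_left distrib_left)
  then have "padic_abs p (of_nat p ^ m * Ssum \<omega> p n - of_nat p ^ m * Ssum \<omega> p k)
      \<le> max (padic_abs p (\<Sum>i\<in>{k..<n}. of_nat p ^ m * \<omega> (p, i))) (padic_abs p (of_nat p ^ m * of_int z))"
    by (simp only: padic_abs_add_le_max[OF p])
  also have "\<dots> \<le> real p * lam / 2" using jumps wrap by simp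
  finally show ?thesis unfolding k_def n_def .
qed

lemma osc_adelic_path_le:
  assumes rate: "\<And>p. prime p \<Longrightarrow> jump_rate b \<sigma> m p \<ge> 0" and "0 \<le> a"
    and m: "(1/2) ^ m \<le> lam" and lam: "lam > 0"
    and small: "\<And>p j. prime p \<Longrightarrow> a < jump_time b \<sigma> m (p, j) \<Longrightarrow> jump_time b \<sigma> m (p, j) < c
                  \<Longrightarrow> \<omega> (p, j) \<notin> big_jumps p m lam"
  shows "osc (adelic_path b \<sigma> m \<omega>) {a..<c} \<le> ereal (lam / 2)"
proof -
  let ?x = "adelic_path b \<sigma> m \<omega>"
  have ordered: "padic_abs p (?x p s - ?x p u) \<le> real p * lam / 2"
    if p: "prime p" and "s \<in> {a..<c}" "u \<in> {a..<c}" "u \<le> s" for p s u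
    unfolding adelic_path_jump_rate
    using that \<open>0 \<le> a\<close> small[OF p]
    by (intro padic_abs_path_increment_le[OF p rate[OF p] _ _ m lam]) (auto simp: jump_time_def)
  have "padic_abs p (?x p s - ?x p u) / real p \<le> lam / 2"
    if p: "prime p" and "s \<in> {a..<c}" "u \<in> {a..<c}" for p s u
  proof -
    have "padic_abs p (?x p s - ?x p u) \<le> real p * lam / 2"
    proof (cases "u \<le> s")
      case False
      then show ?thesis
        using ordered[OF p that(3,2)] padic_abs_minus[OF p, of "?x p u - ?x p s"] by simp
    qed (use ordered[OF that] in simp)
    then show ?thesis using prime_gt_0_nat[OF p] by (simp add: divide_le_eq mult.commute)
  qed
  then show ?thesis
    unfolding osc_def by (intro SUP_least) auto
qed

definition big_jump_events ::
    "real \<Rightarrow> (nat \<Rightarrow> real) \<Rightarrow> nat \<Rightarrow> real \<Rightarrow> real \<Rightarrow> (nat \<times> nat \<Rightarrow> rat) \<Rightarrow> (nat \<times> nat) set" where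
  "big_jump_events b \<sigma> m lam T \<omega> = {e. prime (fst e) \<and> \<omega> e \<in> big_jumps (fst e) m lam
      \<and> jump_rate b \<sigma> m (fst e) > 0 \<and> jump_time b \<sigma> m e < T}"

definition sparse_big_jumps ::
    "real \<Rightarrow> (nat \<Rightarrow> real) \<Rightarrow> nat \<Rightarrow> real \<Rightarrow> real \<Rightarrow> real \<Rightarrow> (nat \<times> nat \<Rightarrow> rat) \<Rightarrow> bool" where
  "sparse_big_jumps b \<sigma> m lam T \<delta> \<omega> \<longleftrightarrow>
     (\<forall>e\<in>big_jump_events b \<sigma> m lam T \<omega>. \<delta> < jump_time b \<sigma> m e) \<and>
     (\<forall>e\<in>big_jump_events b \<sigma> m lam T \<omega>. \<forall>e'\<in>big_jump_events b \<sigma> m lam T \<omega>.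
        e \<noteq> e' \<longrightarrow> \<delta> < \<bar>jump_time b \<sigma> m e - jump_time b \<sigma> m e'\<bar>)"

text \<open>Cut [0,T) at the times of the big jumps.\<close>

lemma mod_cont'_less_if_sparse_big_jumps:
  assumes rate: "\<And>p. prime p \<Longrightarrow> jump_rate b \<sigma> m p \<ge> 0"
    and "T > 0" and lam: "lam > 0" and "\<delta> > 0" and m: "(1/2) ^ m \<le> lam"
    and sparse: "sparse_big_jumps b \<sigma> m lam T \<delta> \<omega>"
  shows "mod_cont' T (adelic_path b \<sigma> m \<omega>) \<delta> < ereal lam"
proof -
  let ?E = "big_jump_events b \<sigma> m lam T \<omega>"
  let ?\<Theta> = "jump_time b \<sigma> m ` ?E"
  have "?\<Theta> \<subseteq> {\<delta><..<T}"
    using sparse by (auto simp: sparse_big_jumps_def big_jump_events_def)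
  moreover have "\<delta> < \<bar>x - y\<bar>" if "x \<in> ?\<Theta>" "y \<in> ?\<Theta>" "x \<noteq> y" for x y
    using that sparse unfolding sparse_big_jumps_def by fastforce
  ultimately obtain v t where part: "ess_sparse_partition T \<delta> v t"
    and avoid: "\<And>i \<theta>. i \<in> {1..v} \<Longrightarrow> \<theta> \<in> ?\<Theta> \<Longrightarrow> \<not> (t (i - 1) < \<theta> \<and> \<theta> < t i)"
    using ess_sparse_partition_avoiding[OF \<open>\<delta> > 0\<close> \<open>T > 0\<close>] by metis
  have bounds: "0 \<le> t (i - 1)" "t i \<le> T" if "i \<in> {1..v}" for i
    using ess_sparse_partition_mono[OF part, of 0 "i - 1"] ess_sparse_partition_mono[OF part, of i v]
      part that by (auto simp: ess_sparse_partition_def)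
  have "osc (adelic_path b \<sigma> m \<omega>) {t (i - 1)..<t i} \<le> ereal (lam / 2)" if i: "i \<in> {1..v}" for i
  proof (rule osc_adelic_path_le[OF rate bounds(1)[OF i] m lam])
    fix p j assume p: "prime p" and j: "t (i - 1) < jump_time b \<sigma> m (p, j)" "jump_time b \<sigma> m (p, j) < t i"
    then have "0 < jump_time b \<sigma> m (p, j)" "jump_time b \<sigma> m (p, j) < T"
      using bounds[OF i] by linarith+
    then have "jump_rate b \<sigma> m p > 0"
      using rate[OF p] by (auto simp: jump_time_def zero_less_divide_iff)
    with p j avoid[OF i] \<open>jump_time b \<sigma> m (p, j) < T\<close>
    show "\<omega> (p, j) \<notin> big_jumps p m lam"
      by (auto simp: big_jump_events_def)
  qed
  then have "Max ((\<lambda>i. osc (adelic_path b \<sigma> m \<omega>) {t (i - 1)..<t i}) ` {1..v}) \<le> ereal (lam / 2)"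
    using part by (simp add: ess_sparse_partition_def)
  moreover have "mod_cont' T (adelic_path b \<sigma> m \<omega>) \<delta>
      \<le> Max ((\<lambda>i. osc (adelic_path b \<sigma> m \<omega>) {t (i - 1)..<t i}) ` {1..v})"
    unfolding mod_cont'_def using part by (intro INF_lower2[of "(v, t)"]) auto
  ultimately show ?thesis using lam by (simp add: le_less_trans)
qed

subsection \<open>Independence of the increments\<close>

lemma measurable_Pspace_indicator [measurable]:
  "(\<lambda>\<omega>. indicator A (\<omega> e) :: ennreal) \<in> borel_measurable (Pspace b)"
proof -
  have "(\<lambda>\<omega>. \<omega> e) \<in> measurable (Pspace b) ((\<lambda>(p, i). measure_pmf (Xdist b p)) e)"
    unfolding Pspace_def by (rule measurable_component_singleton) simp
  then show ?thesis by (rule measurable_compose) (simp add: split_beta)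
qed

lemma nn_integral_Pspace_prod_indicator:
  assumes "finite J"
  shows "(\<integral>\<^sup>+\<omega>. (\<Prod>j\<in>J. indicator (A j) (\<omega> j)) \<partial>Pspace b) = (\<Prod>j\<in>J. emeasure (Xdist b (fst j)) (A j))"
proof -
  let ?M = "\<lambda>(p, i). measure_pmf (Xdist b p)"
  let ?S = "prod_emb UNIV ?M J (Pi\<^sub>E J A)"
  have "(\<lambda>\<omega>. \<Prod>j\<in>J. indicator (A j) (\<omega> j) :: ennreal) = indicator ?S"
  proof
    fix \<omega> :: "nat \<times> nat \<Rightarrow> rat"
    have "\<omega> \<in> ?S \<longleftrightarrow> (\<forall>j\<in>J. \<omega> j \<in> A j)"
      by (auto simp: prod_emb_def PiE_def Pi_def extensional_def split: prod.splits)
    then show "(\<Prod>j\<in>J. indicator (A j) (\<omega> j) :: ennreal) = indicator ?S \<omega>"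
      using assms by (simp add: indicator_def)
  qed
  moreover have "?S \<in> sets (Pspace b)"
    unfolding Pspace_def using assms by (intro sets_PiM_I) (auto simp: split_beta)
  ultimately have "(\<integral>\<^sup>+\<omega>. (\<Prod>j\<in>J. indicator (A j) (\<omega> j)) \<partial>Pspace b) = emeasure (Pspace b) ?S"
    by simp
  also have "\<dots> = (\<Prod>j\<in>J. emeasure (?M j) (A j))"
    unfolding Pspace_def using assms
    by (intro emeasure_PiM_emb) (auto intro: prob_space_measure_pmf simp: split_beta)
  finally show ?thesis by (simp add: split_beta)
qed

lemma nn_integral_Pspace_indicator:
  "(\<integral>\<^sup>+\<omega>. indicator A (\<omega> e) \<partial>Pspace b) = emeasure (Xdist b (fst e)) A"
  using nn_integral_Pspace_prod_indicator[where J="{e}" and A="\<lambda>_. A"] by simp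

lemma nn_integral_Pspace_indicator_pair:
  assumes "e \<noteq> e'"
  shows "(\<integral>\<^sup>+\<omega>. indicator A (\<omega> e) * indicator A' (\<omega> e') \<partial>Pspace b)
       = emeasure (Xdist b (fst e)) A * emeasure (Xdist b (fst e')) A'"
  using nn_integral_Pspace_prod_indicator[where J="{e, e'}" and A="\<lambda>j. if j = e then A else A'"] assms
  by simp

lemma ennreal_le_suminf: "f i \<le> (\<Sum>i. f i :: ennreal)"
  using sum_le_suminf[of f "{i}"] by auto

lemma ennreal_le_suminf_suminf: "f i j \<le> (\<Sum>i. \<Sum>j. f i j :: ennreal)"
  by (rule order_trans[OF ennreal_le_suminf[of "f i" j] ennreal_le_suminf[of "\<lambda>i. \<Sum>j. f i j" i]])

lemma suminf_if_le_card_mult: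
  assumes "finite {i::nat. P i}" and "real (card {i. P i}) \<le> B"
  shows "(\<Sum>i. if P i then c else 0 :: ennreal) \<le> ennreal B * c"
proof -
  have "(\<Sum>i. if P i then c else 0 :: ennreal) = (\<Sum>i\<in>{i. P i}. c)"
    using assms(1) by (subst suminf_finite[of "{i. P i}"]) auto
  also have "\<dots> = of_nat (card {i. P i}) * c" by simp
  also have "\<dots> \<le> ennreal B * c"
    using assms(2) by (intro mult_right_mono) (auto simp: ennreal_of_nat_eq_real_of_nat ennreal_leI)
  finally show ?thesis .
qed

lemma
  assumes "r > 0" and "x \<ge> 0"
  shows finite_arrivals_before: "finite {i::nat. real (Suc i) / r \<le> x}"
    and card_arrivals_before: "real (card {i::nat. real (Suc i) / r \<le> x}) \<le> r * x"
proof -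
  have "real (Suc i) / r \<le> x \<longleftrightarrow> i < nat \<lfloor>r * x\<rfloor>" for i
  proof -
    have "real (Suc i) / r \<le> x \<longleftrightarrow> real (Suc i) \<le> r * x"
      using assms(1) by (simp add: divide_le_eq mult.commute)
    also have "\<dots> \<longleftrightarrow> int (Suc i) \<le> \<lfloor>r * x\<rfloor>" by (simp only: le_floor_iff of_int_of_nat_eq)
    also have "\<dots> \<longleftrightarrow> i < nat \<lfloor>r * x\<rfloor>" by linarith
    finally show ?thesis .
  qed
  then have arrivals: "{i::nat. real (Suc i) / r \<le> x} = {..<nat \<lfloor>r * x\<rfloor>}"
    by auto
  show "finite {i::nat. real (Suc i) / r \<le> x}" unfolding arrivals by simp
  show "real (card {i::nat. real (Suc i) / r \<le> x}) \<le> r * x"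
    unfolding arrivals using assms by simp
qed

lemma
  fixes S :: "nat set"
  assumes "L \<ge> 0" and window: "\<And>i. i \<in> S \<Longrightarrow> a \<le> real i \<and> real i \<le> a + L"
  shows finite_nat_window: "finite S"
    and card_nat_window: "real (card S) \<le> L + 1"
proof -
  have "S \<subseteq> {..nat \<lceil>a + L\<rceil>}"
  proof
    fix i assume "i \<in> S"
    then have "real i \<le> a + L" using window by blast
    then have "int i \<le> \<lceil>a + L\<rceil>" by linarith
    then show "i \<in> {..nat \<lceil>a + L\<rceil>}" by simp
  qed
  then show "finite S" by (rule finite_subset) simp
  show "real (card S) \<le> L + 1"
  proof (cases "S = {}")
    case False
    have "S \<subseteq> {Min S..Max S}" using \<open>finite S\<close> by auto
    then have "card S \<le> card {Min S..Max S}" by (intro card_mono) auto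
    moreover have "real (Max S) - real (Min S) \<le> L"
      using window[of "Max S"] window[of "Min S"] \<open>finite S\<close> False by simp
    moreover have "Min S \<le> Max S" using \<open>finite S\<close> False by simp
    ultimately show ?thesis by (simp add: of_nat_diff)
  qed (use assms(1) in simp)
qed

lemma summable_if_prime:
  assumes "f summable_on {p. prime p}"
  shows "summable (\<lambda>p. if prime p then f p else 0)"
proof -
  have "f summable_on {p. prime p} \<longleftrightarrow> (\<lambda>p. if prime p then f p else 0) summable_on UNIV"
    by (rule summable_on_cong_neutral) auto
  with assms show ?thesis using summable_on_imp_summable by blast
qed

lemma suminf_prime_ennreal_cmult:
  assumes "f summable_on {p. prime p}" and "\<And>p. prime p \<Longrightarrow> 0 \<le> f p" and "0 \<le> c"
  shows "(\<Sum>p. if prime p then ennreal (c * f p) else 0) = ennreal (c * (\<Sum>p. if prime p then f p else 0))"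
proof -
  have sums: "(\<lambda>p. c * (if prime p then f p else 0)) sums (c * (\<Sum>p. if prime p then f p else 0))"
    using summable_if_prime[OF assms(1)] by (intro sums_mult summable_sums)
  have "(\<Sum>p. if prime p then ennreal (c * f p) else 0) = (\<Sum>p. ennreal (c * (if prime p then f p else 0)))"
    by (rule suminf_cong) simp
  also have "\<dots> = ennreal (c * (\<Sum>p. if prime p then f p else 0))"
    using assms(2,3) by (intro suminf_ennreal_eq[OF _ sums]) simp
  finally show ?thesis .
qed

lemma suminf_prime_powr_le:
  assumes "s \<ge> 2"
  shows "(\<Sum>p. if prime p then ennreal (real p powr - s) else 0)
       \<le> ennreal (4 * 2 powr - s * (\<Sum>n. real n powr - 2))"
proof -
  have "(\<Sum>p. if prime p then ennreal (real p powr - s) else 0)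
      \<le> (\<Sum>n. ennreal ((4 * 2 powr - s) * real n powr - 2))"
  proof (intro suminf_le)
    fix n :: nat
    show "(if prime n then ennreal (real n powr - s) else 0) \<le> ennreal ((4 * 2 powr - s) * real n powr - 2)"
    proof (cases "prime n")
      case True
      have n2: "real n \<ge> 2" using prime_ge_2_nat[OF True] by simp
      have "real n powr - s = real n powr - (s - 2) * real n powr - 2"
        using n2 by (simp add: powr_add[symmetric])
      also have "\<dots> \<le> 2 powr - (s - 2) * real n powr - 2"
        using n2 assms by (intro mult_right_mono powr_mono2') auto
      also have "2 powr - (s - 2) = 4 * 2 powr - s"
        by (simp add: powr_diff powr_minus_divide)
      finally show ?thesis using True by (simp add: ennreal_leI)
    qed simp
  qed auto
  also have "\<dots> = ennreal ((4 * 2 powr - s) * (\<Sum>n. real n powr - 2))"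
  proof (rule suminf_ennreal_eq)
    show "(\<lambda>n. (4 * 2 powr - s) * real n powr - 2) sums ((4 * 2 powr - s) * (\<Sum>n. real n powr - 2))"
      by (intro sums_mult summable_sums) (simp add: summable_real_powr_iff)
  qed simp
  finally show ?thesis by (simp add: mult.assoc)
qed

subsection \<open>Probability of non-sparse big jumps\<close>

lemma outer_prob_nonneg: "A \<subseteq> space M \<Longrightarrow> 0 \<le> outer_prob M A"
  unfolding outer_prob_def by (rule cInf_greatest) auto

lemma outer_prob_le_measure:
  assumes "B \<in> sets M" and "A \<subseteq> B"
  shows "outer_prob M A \<le> measure M B"
  unfolding outer_prob_def using assms by (intro cInf_lower bdd_belowI[of _ 0]) auto

locale big_jump_bounds =
  fixes b :: real and \<sigma> :: "nat \<Rightarrow> real" and m :: nat and lam T \<delta> :: real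
  assumes b_pos: "b > 0" and \<sigma>_nonneg: "\<And>p. prime p \<Longrightarrow> 0 \<le> \<sigma> p"
    and \<sigma>_summable: "\<sigma> summable_on {p. prime p}"
    and T_pos: "T > 0" and lam_pos: "lam > 0" and \<delta>_pos: "\<delta> > 0"
begin

abbreviation K :: real where "K \<equiv> (2 / lam) powr b"

abbreviation S :: real where "S \<equiv> \<Sum>p. if prime p then \<sigma> p else 0"

definition big_jump_prob :: "nat \<Rightarrow> ennreal" where
  "big_jump_prob p = emeasure (Xdist b p) (big_jumps p m lam)"

definition early :: "nat \<times> nat \<Rightarrow> bool" where
  "early e \<longleftrightarrow> prime (fst e) \<and> jump_rate b \<sigma> m (fst e) > 0 \<and> jump_time b \<sigma> m e \<le> \<delta>"

definition close :: "nat \<times> nat \<Rightarrow> nat \<times> nat \<Rightarrow> bool" where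
  "close e e' \<longleftrightarrow> prime (fst e) \<and> prime (fst e') \<and> jump_rate b \<sigma> m (fst e) > 0
     \<and> jump_rate b \<sigma> m (fst e') > 0 \<and> jump_time b \<sigma> m e < T \<and> jump_time b \<sigma> m e' < T \<and> e \<noteq> e'
     \<and> \<bar>jump_time b \<sigma> m e - jump_time b \<sigma> m e'\<bar> \<le> \<delta>"

definition big_jump_indicator :: "(nat \<times> nat \<Rightarrow> rat) \<Rightarrow> nat \<times> nat \<Rightarrow> ennreal" where
  "big_jump_indicator \<omega> e = indicator (big_jumps (fst e) m lam) (\<omega> e)"

definition num_early_big_jumps :: "(nat \<times> nat \<Rightarrow> rat) \<Rightarrow> ennreal" where
  "num_early_big_jumps \<omega> = (\<Sum>p. \<Sum>i. if early (p, i) then big_jump_indicator \<omega> (p, i) else 0)"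

definition num_close_big_jumps :: "(nat \<times> nat \<Rightarrow> rat) \<Rightarrow> ennreal" where
  "num_close_big_jumps \<omega> = (\<Sum>p. \<Sum>i. \<Sum>p'. \<Sum>i'. if close (p, i) (p', i')
      then big_jump_indicator \<omega> (p, i) * big_jump_indicator \<omega> (p', i') else 0)"

lemma S_nonneg: "0 \<le> S"
  using summable_if_prime[OF \<sigma>_summable] \<sigma>_nonneg by (intro suminf_nonneg) auto

lemma measurable_big_jump_indicator [measurable]:
  "(\<lambda>\<omega>. big_jump_indicator \<omega> e) \<in> borel_measurable (Pspace b)"
  unfolding big_jump_indicator_def by (rule measurable_Pspace_indicator)

lemma measurable_num_early_big_jumps [measurable]: "num_early_big_jumps \<in> borel_measurable (Pspace b)"
  unfolding num_early_big_jumps_def by measurable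

lemma measurable_num_close_big_jumps [measurable]: "num_close_big_jumps \<in> borel_measurable (Pspace b)"
  unfolding num_close_big_jumps_def by measurable

lemma one_le_num_big_jumps_if_not_sparse:
  assumes "\<not> sparse_big_jumps b \<sigma> m lam T \<delta> \<omega>"
  shows "1 \<le> num_early_big_jumps \<omega> + num_close_big_jumps \<omega>"
proof -
  let ?E = "big_jump_events b \<sigma> m lam T \<omega>"
  have indicator_E: "big_jump_indicator \<omega> e = 1" if "e \<in> ?E" for e
    using that by (simp add: big_jump_events_def big_jump_indicator_def)
  from assms consider (early) e where "e \<in> ?E" "jump_time b \<sigma> m e \<le> \<delta>"
    | (close) e e' where "e \<in> ?E" "e' \<in> ?E" "e \<noteq> e'" "\<bar>jump_time b \<sigma> m e - jump_time b \<sigma> m e'\<bar> \<le> \<delta>"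
    unfolding sparse_big_jumps_def by (meson not_less)
  then show ?thesis
  proof cases
    case (early e)
    obtain p i where e: "e = (p, i)" by (cases e)
    with early have "early (p, i)" by (simp add: big_jump_events_def early_def)
    with early e have "1 = (if early (p, i) then big_jump_indicator \<omega> (p, i) else 0)"
      using indicator_E by simp
    also have "\<dots> \<le> num_early_big_jumps \<omega>"
      unfolding num_early_big_jumps_def by (rule ennreal_le_suminf_suminf)
    finally show ?thesis by (simp add: order_trans)
  next
    case (close e e')
    obtain p i p' i' where e: "e = (p, i)" "e' = (p', i')" by (cases e, cases e')
    with close have "close (p, i) (p', i')" by (simp add: big_jump_events_def close_def)
    with close e have "1 = (if close (p, i) (p', i')
        then big_jump_indicator \<omega> (p, i) * big_jump_indicator \<omega> (p', i') else 0)"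
      using indicator_E by simp
    also have "\<dots> \<le> (\<Sum>p'. \<Sum>i'. if close (p, i) (p', i')
        then big_jump_indicator \<omega> (p, i) * big_jump_indicator \<omega> (p', i') else 0)"
      by (rule ennreal_le_suminf_suminf)
    also have "\<dots> \<le> num_close_big_jumps \<omega>"
      unfolding num_close_big_jumps_def by (rule ennreal_le_suminf_suminf)
    finally show ?thesis by (simp add: add_increasing)
  qed
qed

lemma big_jump_prob_le:
  assumes p: "prime p" and "0 \<le> c"
  shows "ennreal c * big_jump_prob p \<le> ennreal (c * K * real p powr - (real m * b))"
proof -
  have "ennreal c * big_jump_prob p \<le> ennreal c * ennreal (K * real p powr - (real m * b))"
    unfolding big_jump_prob_def by (intro mult_left_mono emeasure_Xdist_big_jumps[OF p b_pos lam_pos]) simp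
  then show ?thesis using \<open>0 \<le> c\<close> by (simp add: ennreal_mult[symmetric] mult.assoc)
qed

text \<open>The rate p^(mb) at which component p jumps is compensated by the probability p^(-mb)
  that a single jump is big: big jumps of component p form a process of intensity at most
  (2/lam)^b sigma_p, uniformly in m.\<close>

lemma jump_rate_mult_big_jump_prob_le:
  assumes p: "prime p" and "0 \<le> c"
  shows "ennreal (c * jump_rate b \<sigma> m p) * big_jump_prob p \<le> ennreal (c * K * \<sigma> p)"
proof -
  have "jump_rate b \<sigma> m p * real p powr - (real m * b) = Dconst b \<sigma> p"
    using prime_gt_0_nat[OF p] by (simp add: jump_rate_def mult.assoc powr_add[symmetric])
  then have eq: "c * jump_rate b \<sigma> m p * K * real p powr - (real m * b) = c * K * Dconst b \<sigma> p"
    by (metis mult.assoc mult.commute)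
  have "0 \<le> c * jump_rate b \<sigma> m p"
    using \<open>0 \<le> c\<close> jump_rate_nonneg[OF p b_pos, of \<sigma>] \<sigma>_nonneg[OF p] by simp
  from big_jump_prob_le[OF p this]
  have "ennreal (c * jump_rate b \<sigma> m p) * big_jump_prob p \<le> ennreal (c * K * Dconst b \<sigma> p)"
    unfolding eq .
  also have "\<dots> \<le> ennreal (c * K * \<sigma> p)"
    using Dconst_le[OF p b_pos, of \<sigma>] \<sigma>_nonneg[OF p] \<open>0 \<le> c\<close> by (intro ennreal_leI mult_left_mono) auto
  finally show ?thesis .
qed

lemma nn_integral_num_early_big_jumps_le:
  "(\<integral>\<^sup>+\<omega>. num_early_big_jumps \<omega> \<partial>Pspace b) \<le> ennreal (\<delta> * K * S)"
proof -
  have "(\<integral>\<^sup>+\<omega>. num_early_big_jumps \<omega> \<partial>Pspace b) = (\<Sum>p. \<Sum>i. if early (p, i) then big_jump_prob p else 0)"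
  proof -
    have single: "(\<integral>\<^sup>+\<omega>. (if early (p, i) then big_jump_indicator \<omega> (p, i) else 0) \<partial>Pspace b)
        = (if early (p, i) then big_jump_prob p else 0)" for p i
      using nn_integral_Pspace_indicator[where e="(p, i)"]
      by (simp add: big_jump_indicator_def big_jump_prob_def)
    show ?thesis
      unfolding num_early_big_jumps_def by (simp add: nn_integral_suminf single)
  qed
  also have "\<dots> \<le> (\<Sum>p. if prime p then ennreal (\<delta> * K * \<sigma> p) else 0)"
  proof (intro suminf_le)
    fix p
    show "(\<Sum>i. if early (p, i) then big_jump_prob p else 0) \<le> (if prime p then ennreal (\<delta> * K * \<sigma> p) else 0)"
    proof (cases "prime p \<and> jump_rate b \<sigma> m p > 0")
      case True
      let ?r = "jump_rate b \<sigma> m p"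
      have "early (p, i) \<longleftrightarrow> real (Suc i) / ?r \<le> \<delta>" for i
        using True by (simp add: early_def jump_time_def)
      then have "(\<Sum>i. if early (p, i) then big_jump_prob p else 0)
          = (\<Sum>i. if real (Suc i) / ?r \<le> \<delta> then big_jump_prob p else 0)" by simp
      also have "\<dots> \<le> ennreal (\<delta> * ?r) * big_jump_prob p"
        using True \<delta>_pos card_arrivals_before[of ?r \<delta>]
        by (intro suminf_if_le_card_mult finite_arrivals_before) (auto simp: mult.commute)
      also have "\<dots> \<le> ennreal (\<delta> * K * \<sigma> p)"
        using True \<delta>_pos by (intro jump_rate_mult_big_jump_prob_le) auto
      finally show ?thesis using True by simp
    qed (auto simp: early_def)
  qed auto
  also have "\<dots> = ennreal (\<delta> * K * S)"
    using \<sigma>_summable \<sigma>_nonneg \<delta>_pos by (subst suminf_prime_ennreal_cmult) (auto simp: mult.assoc)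
  finally show ?thesis .
qed

lemma expected_close_partners_in_component_le:
  "(\<Sum>i'. if close (p, i) (p', i') then big_jump_prob p' else 0)
     \<le> (if prime p' then ennreal (2 * \<delta> * K * \<sigma> p' + K * real p' powr - (real m * b)) else 0)"
proof (cases "prime p' \<and> jump_rate b \<sigma> m p' > 0")
  case True
  then have p': "prime p'" and r: "jump_rate b \<sigma> m p' > 0" by auto
  let ?r = "jump_rate b \<sigma> m p'"
  let ?t = "jump_time b \<sigma> m (p, i)"
  define W where "W i' \<longleftrightarrow> \<bar>?t - real (Suc i') / ?r\<bar> \<le> \<delta>" for i'
  have "(\<Sum>i'. if close (p, i) (p', i') then big_jump_prob p' else 0) \<le> (\<Sum>i'. if W i' then big_jump_prob p' else 0)"
    by (intro suminf_le) (auto simp: close_def W_def jump_time_def)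
  also have "\<dots> \<le> ennreal (2 * \<delta> * ?r + 1) * big_jump_prob p'"
  proof -
    have window: "?r * (?t - \<delta>) - 1 \<le> real i' \<and> real i' \<le> ?r * (?t - \<delta>) - 1 + 2 * \<delta> * ?r"
      if "i' \<in> {i'. W i'}" for i'
    proof -
      have "?t - \<delta> \<le> real (Suc i') / ?r" "real (Suc i') / ?r \<le> ?t + \<delta>"
        using that by (auto simp: W_def)
      then have "?r * (?t - \<delta>) \<le> real (Suc i')" "real (Suc i') \<le> ?r * (?t + \<delta>)"
        using r by (auto simp: field_simps)
      then show ?thesis by (simp add: algebra_simps)
    qed
    have "2 * \<delta> * ?r \<ge> 0" using \<delta>_pos r by simp
    from finite_nat_window[OF this window] card_nat_window[OF this window] show ?thesis
      by (rule suminf_if_le_card_mult)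
  qed
  also have "\<dots> = ennreal (2 * \<delta> * ?r) * big_jump_prob p' + ennreal 1 * big_jump_prob p'"
    using \<delta>_pos r by (simp add: ennreal_plus distrib_right)
  also have "\<dots> \<le> ennreal (2 * \<delta> * K * \<sigma> p') + ennreal (1 * K * real p' powr - (real m * b))"
    using \<delta>_pos jump_rate_mult_big_jump_prob_le[OF p', of "2 * \<delta>"] big_jump_prob_le[OF p', of 1]
    by (intro add_mono) (simp_all add: mult.assoc)
  also have "\<dots> = ennreal (2 * \<delta> * K * \<sigma> p' + K * real p' powr - (real m * b))"
    using \<delta>_pos \<sigma>_nonneg[OF p'] by (simp add: ennreal_plus)
  finally show ?thesis using p' by simp
qed (auto simp: close_def)

lemma expected_close_partners_le:
  assumes "2 \<le> real m * b"
  shows "(\<Sum>p'. \<Sum>i'. if close (p, i) (p', i') then big_jump_prob p' else 0)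
     \<le> ennreal (2 * \<delta> * K * S + K * (4 * 2 powr - (real m * b) * (\<Sum>n. real n powr - 2)))"
proof -
  have "(\<Sum>p'. \<Sum>i'. if close (p, i) (p', i') then big_jump_prob p' else 0)
      \<le> (\<Sum>p'. (if prime p' then ennreal (2 * \<delta> * K * \<sigma> p') else 0)
              + ennreal K * (if prime p' then ennreal (real p' powr - (real m * b)) else 0))"
    using \<delta>_pos \<sigma>_nonneg
    by (intro suminf_le order_trans[OF expected_close_partners_in_component_le])
      (auto simp: ennreal_plus ennreal_mult)
  also have "\<dots> = (\<Sum>p'. if prime p' then ennreal (2 * \<delta> * K * \<sigma> p') else 0)
      + ennreal K * (\<Sum>p'. if prime p' then ennreal (real p' powr - (real m * b)) else 0)"
    by (subst suminf_add[symmetric]) auto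
  also have "\<dots> \<le> ennreal (2 * \<delta> * K * S) + ennreal K * ennreal (4 * 2 powr - (real m * b) * (\<Sum>n. real n powr - 2))"
    using \<sigma>_summable \<sigma>_nonneg \<delta>_pos
    by (intro add_mono mult_left_mono suminf_prime_powr_le assms)
      (auto simp: suminf_prime_ennreal_cmult mult.assoc)
  also have "\<dots> = ennreal (2 * \<delta> * K * S + K * (4 * 2 powr - (real m * b) * (\<Sum>n. real n powr - 2)))"
  proof -
    have "0 \<le> S" by (rule S_nonneg)
    moreover have "0 \<le> (\<Sum>n. real n powr - 2)" by (intro suminf_nonneg) (auto simp: summable_real_powr_iff)
    ultimately show ?thesis using \<delta>_pos by (simp add: ennreal_plus ennreal_mult)
  qed
  finally show ?thesis .
qed

lemma expected_close_pairs_in_component_le: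
  assumes "2 \<le> real m * b"
  shows "(\<Sum>i. \<Sum>p'. \<Sum>i'. if close (p, i) (p', i') then big_jump_prob p * big_jump_prob p' else 0)
    \<le> (if prime p then ennreal (T * K * \<sigma> p) else 0)
        * ennreal (2 * \<delta> * K * S + K * (4 * 2 powr - (real m * b) * (\<Sum>n. real n powr - 2)))"
    (is "_ \<le> _ * ennreal ?B")
proof (cases "prime p \<and> jump_rate b \<sigma> m p > 0")
  case True
  then have p: "prime p" and r: "jump_rate b \<sigma> m p > 0" by auto
  let ?r = "jump_rate b \<sigma> m p"
  have "(\<Sum>p'. \<Sum>i'. if close (p, i) (p', i') then big_jump_prob p * big_jump_prob p' else 0)
      \<le> (if real (Suc i) / ?r \<le> T then big_jump_prob p * ennreal ?B else 0)" for i
  proof (cases "real (Suc i) / ?r \<le> T")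
    case True
    have "(if close (p, i) (p', i') then big_jump_prob p * big_jump_prob p' else 0)
        = big_jump_prob p * (if close (p, i) (p', i') then big_jump_prob p' else 0)" for p' i'
      by simp
    then have "(\<Sum>p'. \<Sum>i'. if close (p, i) (p', i') then big_jump_prob p * big_jump_prob p' else 0)
        = big_jump_prob p * (\<Sum>p'. \<Sum>i'. if close (p, i) (p', i') then big_jump_prob p' else 0)"
      by simp
    also have "\<dots> \<le> big_jump_prob p * ennreal ?B"
      by (intro mult_left_mono expected_close_partners_le assms) simp
    finally show ?thesis using True by simp
  next
    case False
    then have "\<not> close (p, i) (p', i')" for p' i' using r by (auto simp: close_def jump_time_def)
    then show ?thesis by simp
  qed
  then have "(\<Sum>i. \<Sum>p'. \<Sum>i'. if close (p, i) (p', i') then big_jump_prob p * big_jump_prob p' else 0)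
      \<le> (\<Sum>i. if real (Suc i) / ?r \<le> T then big_jump_prob p * ennreal ?B else 0)"
    by (intro suminf_le) auto
  also have "\<dots> \<le> ennreal (T * ?r) * (big_jump_prob p * ennreal ?B)"
    using r T_pos card_arrivals_before[of ?r T]
    by (intro suminf_if_le_card_mult finite_arrivals_before) (auto simp: mult.commute)
  also have "\<dots> = ennreal (T * ?r) * big_jump_prob p * ennreal ?B" by (simp add: mult.assoc)
  also have "\<dots> \<le> ennreal (T * K * \<sigma> p) * ennreal ?B"
    using T_pos by (intro mult_right_mono jump_rate_mult_big_jump_prob_le[OF p]) auto
  finally show ?thesis using p by simp
qed (auto simp: close_def)

lemma nn_integral_num_close_big_jumps_le:
  assumes "2 \<le> real m * b"
  shows "(\<integral>\<^sup>+\<omega>. num_close_big_jumps \<omega> \<partial>Pspace b)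
    \<le> ennreal (T * K * S) * ennreal (2 * \<delta> * K * S + K * (4 * 2 powr - (real m * b) * (\<Sum>n. real n powr - 2)))"
proof -
  have pair: "(\<integral>\<^sup>+\<omega>. (if close (p, i) (p', i')
        then big_jump_indicator \<omega> (p, i) * big_jump_indicator \<omega> (p', i') else 0) \<partial>Pspace b)
      = (if close (p, i) (p', i') then big_jump_prob p * big_jump_prob p' else 0)" for p i p' i'
    using nn_integral_Pspace_indicator_pair[of "(p, i)" "(p', i')"]
    by (auto simp: big_jump_indicator_def big_jump_prob_def close_def)
  have "(\<integral>\<^sup>+\<omega>. num_close_big_jumps \<omega> \<partial>Pspace b)
      = (\<Sum>p. \<Sum>i. \<Sum>p'. \<Sum>i'. if close (p, i) (p', i') then big_jump_prob p * big_jump_prob p' else 0)"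
    unfolding num_close_big_jumps_def by (simp add: nn_integral_suminf pair)
  also have "\<dots> \<le> (\<Sum>p. (if prime p then ennreal (T * K * \<sigma> p) else 0)
      * ennreal (2 * \<delta> * K * S + K * (4 * 2 powr - (real m * b) * (\<Sum>n. real n powr - 2))))"
    by (intro suminf_le expected_close_pairs_in_component_le assms) auto
  also have "\<dots> = ennreal (T * K * S)
      * ennreal (2 * \<delta> * K * S + K * (4 * 2 powr - (real m * b) * (\<Sum>n. real n powr - 2)))"
    using \<sigma>_summable \<sigma>_nonneg T_pos by (simp add: suminf_prime_ennreal_cmult mult.assoc)
  finally show ?thesis .
qed

lemma outer_prob_mod_cont'_ge_le:
  assumes "2 \<le> real m * b" and "(1/2) ^ m \<le> lam"
  shows "outer_prob (Pspace b) {\<omega> \<in> space (Pspace b). mod_cont' T (adelic_path b \<sigma> m \<omega>) \<delta> \<ge> ereal lam}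
    \<le> \<delta> * K * S + T * K * S * (2 * \<delta> * K * S + K * (4 * 2 powr - (real m * b) * (\<Sum>n. real n powr - 2)))"
    (is "_ \<le> ?A + ?C * ?B")
proof -
  define Bad where "Bad = {\<omega> \<in> space (Pspace b). 1 \<le> num_early_big_jumps \<omega> + num_close_big_jumps \<omega>}"
  have Bad_sets: "Bad \<in> sets (Pspace b)" unfolding Bad_def by measurable
  have "{\<omega> \<in> space (Pspace b). mod_cont' T (adelic_path b \<sigma> m \<omega>) \<delta> \<ge> ereal lam} \<subseteq> Bad"
    using mod_cont'_less_if_sparse_big_jumps[OF jump_rate_nonneg[OF _ b_pos \<sigma>_nonneg] T_pos
        lam_pos \<delta>_pos assms(2)] one_le_num_big_jumps_if_not_sparse
    by (force simp: Bad_def not_le[symmetric])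
  then have "outer_prob (Pspace b) {\<omega> \<in> space (Pspace b). mod_cont' T (adelic_path b \<sigma> m \<omega>) \<delta> \<ge> ereal lam}
      \<le> measure (Pspace b) Bad"
    by (rule outer_prob_le_measure[OF Bad_sets])
  also have "measure (Pspace b) Bad \<le> ?A + ?C * ?B"
  proof -
    have nonneg: "0 \<le> ?A" "0 \<le> ?C" "0 \<le> ?B"
      using S_nonneg \<delta>_pos T_pos suminf_nonneg[of "\<lambda>n. real n powr - 2"]
      by (auto simp: summable_real_powr_iff)
    have "emeasure (Pspace b) Bad = (\<integral>\<^sup>+\<omega>. indicator Bad \<omega> \<partial>Pspace b)"
      using Bad_sets by simp
    also have "\<dots> \<le> (\<integral>\<^sup>+\<omega>. num_early_big_jumps \<omega> + num_close_big_jumps \<omega> \<partial>Pspace b)"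
      by (intro nn_integral_mono) (auto simp: Bad_def split: split_indicator)
    also have "\<dots> = (\<integral>\<^sup>+\<omega>. num_early_big_jumps \<omega> \<partial>Pspace b) + (\<integral>\<^sup>+\<omega>. num_close_big_jumps \<omega> \<partial>Pspace b)"
      by (rule nn_integral_add) auto
    also have "\<dots> \<le> ennreal ?A + ennreal ?C * ennreal ?B"
      by (intro add_mono nn_integral_num_early_big_jumps_le nn_integral_num_close_big_jumps_le assms(1))
    also have "\<dots> = ennreal (?A + ?C * ?B)"
      using nonneg by (simp add: ennreal_plus ennreal_mult)
    finally show ?thesis
      using nonneg unfolding measure_def by (intro enn2real_leI) auto
  qed
  finally show ?thesis .
qed

end

lemma limsup_tendsto_0_at_right:
  fixes P :: "real \<Rightarrow> nat \<Rightarrow> real"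
  assumes nonneg: "\<And>\<delta> m. 0 \<le> P \<delta> m"
    and bound: "\<And>\<delta>. \<delta> > 0 \<Longrightarrow> eventually (\<lambda>m. P \<delta> m \<le> C \<delta> + E m) sequentially"
    and E: "E \<longlonglongrightarrow> 0" and C: "(C \<longlongrightarrow> 0) (at_right 0)"
  shows "((\<lambda>\<delta>. limsup (\<lambda>m. ereal (P \<delta> m))) \<longlongrightarrow> 0) (at_right 0)"
proof (rule tendsto_sandwich[where f="\<lambda>_. 0" and h="\<lambda>\<delta>. ereal (C \<delta>)"])
  show "\<forall>\<^sub>F \<delta> in at_right 0. 0 \<le> limsup (\<lambda>m. ereal (P \<delta> m))"
    using nonneg by (intro always_eventually allI le_Limsup) auto
  have "limsup (\<lambda>m. ereal (P \<delta> m)) \<le> ereal (C \<delta>)" if "\<delta> > 0" for \<delta>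
  proof -
    have "limsup (\<lambda>m. ereal (P \<delta> m)) \<le> limsup (\<lambda>m. ereal (C \<delta> + E m))"
      using bound[OF that] by (intro Limsup_mono) (auto elim: eventually_mono)
    also have "\<dots> = ereal (C \<delta>)"
    proof (intro lim_imp_Limsup)
      show "(\<lambda>m. ereal (C \<delta> + E m)) \<longlonglongrightarrow> ereal (C \<delta>)"
        using tendsto_add[OF tendsto_const E, of "C \<delta>"] by simp
    qed simp
    finally show ?thesis .
  qed
  then show "\<forall>\<^sub>F \<delta> in at_right 0. limsup (\<lambda>m. ereal (P \<delta> m)) \<le> ereal (C \<delta>)"
    by (intro eventually_at_rightI[of 0 1]) auto
  show "((\<lambda>\<delta>. ereal (C \<delta>)) \<longlongrightarrow> 0) (at_right 0)"
    using C by (simp add: zero_ereal_def)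
qed simp

lemma eventually_large_scale:
  fixes b lam :: real
  assumes "b > 0" and "lam > 0"
  shows "eventually (\<lambda>m. 2 \<le> real m * b \<and> (1/2) ^ m \<le> lam) sequentially"
proof (rule eventually_conj)
  obtain N :: nat where "2 / b \<le> real N" using real_arch_simple by blast
  then show "eventually (\<lambda>m. 2 \<le> real m * b) sequentially"
    using assms(1) by (intro eventually_sequentiallyI[of N]) (simp add: divide_le_eq order_trans)
  have "(\<lambda>m. (1/2::real) ^ m) \<longlonglongrightarrow> 0" by (rule LIMSEQ_power_zero) simp
  from order_tendstoD(2)[OF this assms(2)]
  show "eventually (\<lambda>m. (1/2) ^ m \<le> lam) sequentially"
    by (rule eventually_mono) simp
qed

theorem proposition3:
  fixes b :: real and \<sigma> :: "nat \<Rightarrow> real" and T lam :: real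
  assumes "b > 0"
    and "\<forall>p. prime p \<longrightarrow> \<sigma> p \<ge> 0"
    and "\<sigma> summable_on {p. prime p}"
    and "T > 0" and "lam > 0"
  shows "((\<lambda>\<delta>. limsup (\<lambda>m. ereal (outer_prob (Pspace b)
            {\<omega> \<in> space (Pspace b). mod_cont' T (adelic_path b \<sigma> m \<omega>) \<delta> \<ge> ereal lam})))
          \<longlongrightarrow> 0) (at_right 0)"
proof -
  define K where "K = (2 / lam) powr b"
  define S where "S = (\<Sum>p. if prime p then \<sigma> p else 0)"
  define Z where "Z = (\<Sum>n. real n powr - 2)"
  have bound: "outer_prob (Pspace b) {\<omega> \<in> space (Pspace b). mod_cont' T (adelic_path b \<sigma> m \<omega>) \<delta> \<ge> ereal lam}
      \<le> (\<delta> * K * S + T * K * S * (2 * \<delta> * K * S)) + T * K * S * K * 4 * Z * (2 powr - b) ^ m"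
    if "\<delta> > 0" "2 \<le> real m * b" "(1/2) ^ m \<le> lam" for \<delta> m
  proof -
    interpret big_jump_bounds b \<sigma> m lam T \<delta> using assms that(1) by unfold_locales auto
    show ?thesis using outer_prob_mod_cont'_ge_le[OF that(2,3)]
      by (simp add: K_def S_def Z_def powr_power algebra_simps)
  qed
  show ?thesis
  proof (rule limsup_tendsto_0_at_right)
    show "0 \<le> outer_prob (Pspace b) {\<omega> \<in> space (Pspace b). mod_cont' T (adelic_path b \<sigma> m \<omega>) \<delta> \<ge> ereal lam}"
      for \<delta> m by (rule outer_prob_nonneg) auto
    show "eventually (\<lambda>m. outer_prob (Pspace b) {\<omega> \<in> space (Pspace b). mod_cont' T (adelic_path b \<sigma> m \<omega>) \<delta> \<ge> ereal lam}
        \<le> (\<delta> * K * S + T * K * S * (2 * \<delta> * K * S)) + T * K * S * K * 4 * Z * (2 powr - b) ^ m) sequentially"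
      if "\<delta> > 0" for \<delta>
      using eventually_large_scale[OF assms(1,5)] by (rule eventually_mono) (use bound that in blast)
    show "(\<lambda>m. T * K * S * K * 4 * Z * (2 powr - b) ^ m) \<longlonglongrightarrow> 0"
      using assms(1) by (intro tendsto_mult_right_zero LIMSEQ_power_zero) (simp add: powr_less_one)
    show "((\<lambda>\<delta>. \<delta> * K * S + T * K * S * (2 * \<delta> * K * S)) \<longlongrightarrow> 0) (at_right 0)"
      by (auto intro!: tendsto_eq_intros)
  qed
qed

end
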